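(* Let $h>0$, $K>0$, $g\in C^1(\mathbb{R}_+,\mathbb{R}_+)$ with $g(0)=0$, $g(K)=K$ and $g'(0+)=p>1$, and let $\psi$ be a nonnegative solution of $x'(t)=-x(t)+g(x(t-h))$ on $\mathbb{R}$ with $\psi(-\infty)=0$, $\psi(+\infty)=K$. Let $\lambda$ be the positive root of $z=-1+pe^{-zh}$. If the finite limit $g''(0+)$ exists, then for each $\delta>0$ there is $t_0\in\mathbb{R}$ such that, as $t\to-\infty$, $$\psi(t-t_0)=e^{\lambda t}+O(e^{(2\lambda-\delta)t}),\qquad \psi'(t-t_0)=\lambda e^{\lambda t}+O(e^{(2\lambda-\delta)t}),$$ and hence $\psi'>0$ on some semi-axis $(-\infty,T]$. Moreover, if $g''$ exists and is bounded on $[0,\epsilon)$ for some $\epsilon>0$, then such a solution $\psi$ is unique up to a translation in $t$. *)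

theory Defs
  imports "HOL-Analysis.Analysis" "HOL-Library.Landau_Symbols"
begin

definition connecting_solution ::
  "(real \<Rightarrow> real) \<Rightarrow> real \<Rightarrow> real \<Rightarrow> (real \<Rightarrow> real) \<Rightarrow> bool" where
  "connecting_solution g h K \<psi> \<longleftrightarrow>
     (\<forall>t. \<psi> t \<ge> 0) \<and>
     (\<forall>t. (\<psi> has_real_derivative (- \<psi> t + g (\<psi> (t - h)))) (at t)) \<and>
     (\<psi> \<longlongrightarrow> 0) at_bot \<and>
     (\<psi> \<longlongrightarrow> K) at_top"

end

theory Submission
  imports Defs
begin

text \<open>
  Write \<open>\<psi> t = exp (lam t) u t\<close>. Since \<open>lam\<close> solves \<open>p exp (- lam h) = 1 + lam\<close>, the
  profile \<open>u\<close> satisfies \<open>u' t = (1 + lam) (u (t - h) - u t) + f t\<close>, where the forcing \<open>f\<close> is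
  \<open>O (\<psi> (t - h)\<^sup>2 exp (- lam t))\<close> as soon as \<open>g'\<close> is Lipschitz at \<open>0\<close>; each of the two hypotheses
  on \<open>g''\<close> is used only to ensure this. The function \<open>u t + (1 + lam) \<integral>\<^sub>t\<^sub>-\<^sub>h\<^sup>t u\<close> has derivative
  \<open>f\<close>; comparing it across one delay shows first that \<open>u\<close> grows at most like \<open>exp (- lam t / 4)\<close>
  and then that \<open>u\<close> is bounded near \<open>-\<infinity>\<close>, so \<open>f = O (exp (lam t))\<close>. The delay term then
  contracts the oscillation of \<open>u\<close> on consecutive windows of length \<open>h\<close> by a fixed factor, whence
  \<open>u' = O (exp (lam t))\<close> and \<open>u t = c + O (exp (lam t))\<close>. Thus
  \<open>\<psi> t = c exp (lam t) + O (exp (2 lam t))\<close>, and the equation gives the corresponding expansion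
  of \<open>\<psi>'\<close>; the error is in fact \<open>O (exp (2 lam t))\<close>, without the loss \<open>\<delta>\<close>.

  Two nonnegative solutions tending to \<open>0\<close> at \<open>-\<infinity>\<close> whose difference is \<open>O (exp (2 lam t))\<close>
  coincide: the difference solves a linear delay equation with a perturbation that is small near
  \<open>-\<infinity>\<close>, and in the norm weighted by \<open>exp (- 2 lam t)\<close> this equation is a contraction on
  \<open>]-\<infinity>, T]\<close>; so the difference vanishes there, and everywhere by the method of steps.
  Comparing \<open>\<psi>\<close> with the zero solution gives \<open>c > 0\<close>; comparing a second front with the
  translate of \<open>\<psi>\<close> that has the same leading coefficient gives uniqueness up to translation.
\<close>

section \<open>Exponential weights and the method of steps\<close>

lemma tendsto_mult_exp_at_bot:
  fixes lam A :: real
  assumes "lam > 0"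
  shows "((\<lambda>t. A * exp (lam * t)) \<longlongrightarrow> 0) at_bot"
proof -
  have "((\<lambda>t. A * exp (lam * t)) \<longlongrightarrow> A * 0) at_bot"
    by (intro tendsto_mult tendsto_const filterlim_compose[OF exp_at_bot]
        filterlim_tendsto_pos_mult_at_bot[OF tendsto_const assms filterlim_ident])
  then show ?thesis by simp
qed

lemma eventually_mult_exp_less_at_bot:
  fixes lam A \<epsilon> :: real
  assumes "lam > 0" "\<epsilon> > 0"
  shows "eventually (\<lambda>t. A * exp (lam * t) < \<epsilon>) at_bot"
  using order_tendstoD(2)[OF tendsto_mult_exp_at_bot] assms by blast

lemma nonneg_if_abs_le_mult_exp:
  fixes y G x :: real
  assumes "\<bar>y\<bar> \<le> G * exp x"
  shows "G \<ge> 0"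
proof -
  have "0 \<le> G * exp x"
    using assms abs_ge_zero[of y] by linarith
  then show ?thesis
    by (simp add: zero_le_mult_iff)
qed

lemma exists_antiderivative:
  fixes u :: "real \<Rightarrow> real"
  assumes "continuous_on UNIV u"
  shows "\<exists>U. \<forall>t. (U has_real_derivative u t) (at t)"
proof -
  have "\<exists>U. \<forall>t::real. - \<infinity> < t \<longrightarrow> t < \<infinity> \<longrightarrow> (U has_vector_derivative u t) (at t)"
    by (rule einterval_antiderivative) (use assms in \<open>auto simp: continuous_on_eq_continuous_at\<close>)
  then show ?thesis
    by (simp add: has_real_derivative_iff_has_vector_derivative)
qed

lemma delay_solutions_agree_step:
  fixes x y g :: "real \<Rightarrow> real"
  assumes dx: "\<And>t. (x has_real_derivative (- x t + g (x (t - h)))) (at t)"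
    and dy: "\<And>t. (y has_real_derivative (- y t + g (y (t - h)))) (at t)"
    and eq: "\<And>t. t \<le> T \<Longrightarrow> x t = y t"
    and t: "t \<le> T + h"
  shows "x t = y t"
proof (cases "t \<le> T")
  case False
  define d where "d \<tau> = (x \<tau> - y \<tau>) * exp \<tau>" for \<tau>
  have d_deriv: "(d has_real_derivative (g (x (\<tau> - h)) - g (y (\<tau> - h))) * exp \<tau>) (at \<tau>)" for \<tau>
    unfolding d_def
    by (rule derivative_eq_intros refl dx dy | simp add: algebra_simps)+
  have "d t = d T"
  proof (rule DERIV_isconst2[of T t])
    show "continuous_on {T..t} d"
      using d_deriv by (meson DERIV_continuous continuous_at_imp_continuous_on)
    show "DERIV d \<tau> :> 0" if "T < \<tau>" "\<tau> < t" for \<tau>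
      using d_deriv[of \<tau>] eq[of "\<tau> - h"] that t by simp
  qed (use False in auto)
  then show ?thesis using eq[of T] by (simp add: d_def)
qed (use eq in simp)

lemma delay_solutions_agree:
  fixes x y g :: "real \<Rightarrow> real"
  assumes h: "h > 0"
    and dx: "\<And>t. (x has_real_derivative (- x t + g (x (t - h)))) (at t)"
    and dy: "\<And>t. (y has_real_derivative (- y t + g (y (t - h)))) (at t)"
    and eq: "\<And>t. t \<le> T \<Longrightarrow> x t = y t"
  shows "x = y"
proof
  fix t
  have "\<forall>t \<le> T + real n * h. x t = y t" for n
  proof (induction n)
    case (Suc n)
    then show ?case
      using delay_solutions_agree_step[OF dx dy, of "T + real n * h"] by (simp add: algebra_simps)
  qed (use eq in simp)
  moreover obtain n :: nat where "(t - T) / h \<le> real n"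
    using real_arch_simple by blast
  ultimately show "x t = y t"
    using h by (simp add: field_simps)
qed

section \<open>A contraction principle for linear delay equations\<close>

lemma nonpos_if_antimono_exp_small_at_bot:
  fixes q :: "real \<Rightarrow> real"
  assumes b: "b > 0"
    and small: "\<And>s. s \<le> t \<Longrightarrow> \<bar>q s\<bar> \<le> A * exp (b * s)"
    and antimono: "\<And>s. s \<le> t \<Longrightarrow> q t \<le> q s"
  shows "q t \<le> 0"
proof -
  have "(q \<longlongrightarrow> 0) at_bot"
  proof (rule Lim_null_comparison)
    show "eventually (\<lambda>s. norm (q s) \<le> A * exp (b * s)) at_bot"
      unfolding eventually_at_bot_linorder using small by auto
  qed (rule tendsto_mult_exp_at_bot[OF b])
  moreover have "eventually (\<lambda>s. q t \<le> q s) at_bot"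
    unfolding eventually_at_bot_linorder using antimono by blast
  ultimately show ?thesis
    by (rule tendsto_lowerbound) simp
qed

lemma delay_solution_weighted_upper_bound:
  fixes x \<rho> :: "real \<Rightarrow> real"
  assumes h: "h \<ge> 0" and mu: "\<mu> > 0" and eta: "\<eta> \<ge> 0"
    and dx: "\<And>t. t \<le> T \<Longrightarrow> (x has_real_derivative (- x t + p * x (t - h) + \<rho> t)) (at t)"
    and rho: "\<And>t. t \<le> T \<Longrightarrow> \<bar>\<rho> t\<bar> \<le> \<eta> * \<bar>x (t - h)\<bar>"
    and S: "\<And>t. t \<le> T \<Longrightarrow> \<bar>x t\<bar> * exp (- \<mu> * t) \<le> S"
    and t: "t \<le> T"
  shows "x t * exp (- \<mu> * t) \<le> (\<bar>p\<bar> + \<eta>) * exp (- \<mu> * h) * S / (1 + \<mu>)"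
proof -
  define k where "k = (\<bar>p\<bar> + \<eta>) * exp (- \<mu> * h)"
  define b where "b = 1 + \<mu>"
  have b: "b > 0" and b_nz: "1 + \<mu> \<noteq> 0" using mu by (simp_all add: b_def)
  define q where "q \<tau> = (x \<tau> * exp (- \<mu> * \<tau>) - k * S / b) * exp (b * \<tau>)" for \<tau>
  have perturbation: "(p * x (\<tau> - h) + \<rho> \<tau>) * exp (- \<mu> * \<tau>) \<le> k * S" if \<tau>: "\<tau> \<le> T" for \<tau>
  proof -
    have "\<bar>p * x (\<tau> - h) + \<rho> \<tau>\<bar> \<le> (\<bar>p\<bar> + \<eta>) * \<bar>x (\<tau> - h)\<bar>"
      using abs_triangle_ineq[of "p * x (\<tau> - h)" "\<rho> \<tau>"] rho[OF \<tau>]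
      by (simp add: abs_mult distrib_right)
    then have "(p * x (\<tau> - h) + \<rho> \<tau>) * exp (- \<mu> * \<tau>)
        \<le> (\<bar>p\<bar> + \<eta>) * \<bar>x (\<tau> - h)\<bar> * exp (- \<mu> * \<tau>)"
      by (intro mult_right_mono) auto
    also have "\<dots> = k * (\<bar>x (\<tau> - h)\<bar> * exp (- \<mu> * (\<tau> - h)))"
      by (simp add: k_def algebra_simps flip: exp_add)
    also have "\<dots> \<le> k * S"
      using S[of "\<tau> - h"] \<tau> h eta by (intro mult_left_mono) (auto simp: k_def)
    finally show ?thesis .
  qed
  have q_mono: "q t \<le> q s" if "s \<le> t" for s
  proof (rule DERIV_nonpos_imp_nonincreasing[OF that])
    fix \<tau> assume "s \<le> \<tau>" "\<tau> \<le> t"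
    then have \<tau>: "\<tau> \<le> T" using t by simp
    have "(q has_real_derivative ((p * x (\<tau> - h) + \<rho> \<tau>) * exp (- \<mu> * \<tau>) - k * S) * exp (b * \<tau>))
        (at \<tau>)"
      unfolding q_def
      by (rule derivative_eq_intros refl dx[OF \<tau>] | simp add: b_def b_nz field_simps)+
    moreover have "((p * x (\<tau> - h) + \<rho> \<tau>) * exp (- \<mu> * \<tau>) - k * S) * exp (b * \<tau>) \<le> 0"
      using perturbation[OF \<tau>] by (intro mult_nonpos_nonneg) auto
    ultimately show "\<exists>y. DERIV q \<tau> :> y \<and> y \<le> 0"
      by blast
  qed
  have "\<bar>q s\<bar> \<le> (S + \<bar>k * S / b\<bar>) * exp (b * s)" if "s \<le> t" for s
  proof -
    have "\<bar>x s * exp (- \<mu> * s)\<bar> \<le> S"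
      using S[of s] that t by (simp add: abs_mult)
    then have "\<bar>x s * exp (- \<mu> * s) - k * S / b\<bar> \<le> S + \<bar>k * S / b\<bar>"
      by (meson abs_triangle_ineq4 add_right_mono order_trans)
    then show ?thesis
      unfolding q_def abs_mult abs_exp_cancel by (rule mult_right_mono) simp
  qed
  from b this q_mono have "q t \<le> 0"
    by (rule nonpos_if_antimono_exp_small_at_bot)
  then show ?thesis
    using b by (simp add: q_def k_def b_def mult_le_0_iff)
qed

text \<open>Weighted by \<open>exp (- \<mu> t)\<close>, the delay equation contracts the supremum norm on \<open>]-\<infinity>, T]\<close>
  by the factor \<open>(\<bar>p\<bar> + \<eta>) exp (- \<mu> h) / (1 + \<mu>) < 1\<close>.\<close>

lemma delay_solution_vanishes_if_fast_decay:
  fixes x \<rho> :: "real \<Rightarrow> real"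
  assumes h: "h \<ge> 0" and mu: "\<mu> > 0" and eta: "\<eta> \<ge> 0"
    and dx: "\<And>t. t \<le> T \<Longrightarrow> (x has_real_derivative (- x t + p * x (t - h) + \<rho> t)) (at t)"
    and rho: "\<And>t. t \<le> T \<Longrightarrow> \<bar>\<rho> t\<bar> \<le> \<eta> * \<bar>x (t - h)\<bar>"
    and decay: "\<And>t. t \<le> T \<Longrightarrow> \<bar>x t\<bar> \<le> M * exp (\<mu> * t)"
    and contraction: "(\<bar>p\<bar> + \<eta>) * exp (- \<mu> * h) < 1 + \<mu>"
    and t: "t \<le> T"
  shows "x t = 0"
proof -
  define z where "z \<tau> = \<bar>x \<tau>\<bar> * exp (- \<mu> * \<tau>)" for \<tau>
  define S where "S = (SUP \<tau>\<in>{..T}. z \<tau>)"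
  define k where "k = (\<bar>p\<bar> + \<eta>) * exp (- \<mu> * h) / (1 + \<mu>)"
  have "z \<tau> \<le> M" if "\<tau> \<le> T" for \<tau>
    using mult_right_mono[OF decay[OF that], of "exp (- \<mu> * \<tau>)"]
    by (simp add: z_def mult.assoc flip: exp_add)
  then have bdd: "bdd_above (z ` {..T})"
    by (auto intro!: bdd_aboveI[of _ M])
  have zS: "z \<tau> \<le> S" if "\<tau> \<le> T" for \<tau>
    unfolding S_def by (rule cSUP_upper[OF _ bdd]) (use that in auto)
  have "z \<tau> \<le> k * S" if \<tau>: "\<tau> \<le> T" for \<tau>
  proof -
    have dmx: "((\<lambda>t. - x t) has_real_derivative (- (- x t) + p * (- x (t - h)) + - \<rho> t)) (at t)"
      if "t \<le> T" for t
      using dx[OF that] by (auto intro!: derivative_eq_intros)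
    have "x \<tau> * exp (- \<mu> * \<tau>) \<le> k * S"
      using delay_solution_weighted_upper_bound[OF h mu eta dx rho _ \<tau>, of S] zS
      by (simp add: z_def k_def)
    moreover have "- x \<tau> * exp (- \<mu> * \<tau>) \<le> k * S"
    proof -
      have "\<bar>- \<rho> t\<bar> \<le> \<eta> * \<bar>- x (t - h)\<bar>" "\<bar>- x t\<bar> * exp (- \<mu> * t) \<le> S" if "t \<le> T" for t
        using rho[OF that] zS[OF that] by (simp_all add: z_def)
      from delay_solution_weighted_upper_bound[OF h mu eta dmx this \<tau>] show ?thesis
        by (simp add: k_def)
    qed
    ultimately show ?thesis
      by (cases "x \<tau> \<ge> 0") (auto simp: z_def)
  qed
  then have "S \<le> k * S"
    unfolding S_def by (intro cSUP_least) auto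
  moreover have "S \<ge> 0"
  proof -
    have "0 \<le> z T" by (simp add: z_def)
    then show ?thesis using zS[of T] by linarith
  qed
  moreover have "k < 1"
    using contraction mu by (simp add: k_def)
  ultimately have "S = 0"
    by (auto simp: mult_le_cancel_right1)
  then show ?thesis
    using zS[OF t] by (simp add: z_def mult_le_0_iff)
qed

section \<open>Oscillation on delay windows\<close>

lemma delay_step_upper_bound:
  fixes y f :: "real \<Rightarrow> real"
  assumes a: "a > 0" and h: "h > 0"
    and dy: "\<And>\<tau>. \<tau> \<in> {s..s+h} \<Longrightarrow> (y has_real_derivative (a * (y (\<tau> - h) - y \<tau>) + f \<tau>)) (at \<tau>)"
    and M: "\<And>\<tau>. \<tau> \<in> {s-h..s} \<Longrightarrow> y \<tau> \<le> M"
    and F: "\<And>\<tau>. \<tau> \<in> {s..s+h} \<Longrightarrow> f \<tau> \<le> \<Phi>" and Phi: "\<Phi> \<ge> 0"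
    and t: "t \<in> {s..s+h}"
  shows "y t \<le> M + h * \<Phi> - exp (- a * h) * (M - y s)"
proof -
  define q where "q \<tau> = (y \<tau> - M - (\<tau> - s) * \<Phi>) * exp (a * (\<tau> - s))" for \<tau>
  have "q t \<le> q s"
  proof (rule DERIV_nonpos_imp_nonincreasing[of s t q])
    fix \<tau> assume "s \<le> \<tau>" "\<tau> \<le> t"
    then have \<tau>: "\<tau> \<in> {s..s+h}" using t by simp
    have "(q has_real_derivative
        (a * (y (\<tau> - h) - M) + (f \<tau> - \<Phi>) - a * ((\<tau> - s) * \<Phi>)) * exp (a * (\<tau> - s))) (at \<tau>)"
      unfolding q_def by (rule derivative_eq_intros refl dy[OF \<tau>] | simp add: algebra_simps)+
    moreover
    have "a * (y (\<tau> - h) - M) \<le> 0" "a * ((\<tau> - s) * \<Phi>) \<ge> 0"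
      using M[of "\<tau> - h"] \<tau> a Phi by (simp_all add: mult_nonneg_nonpos)
    then have "(a * (y (\<tau> - h) - M) + (f \<tau> - \<Phi>) - a * ((\<tau> - s) * \<Phi>)) * exp (a * (\<tau> - s)) \<le> 0"
      using F[OF \<tau>] by (intro mult_nonpos_nonneg) auto
    ultimately show "\<exists>d. DERIV q \<tau> :> d \<and> d \<le> 0"
      by blast
  qed (use t in simp)
  then have "(y t - M - (t - s) * \<Phi>) * exp (a * (t - s)) \<le> y s - M"
    by (simp add: q_def)
  from mult_right_mono[OF this, of "exp (- a * (t - s))"]
  have "y t - M - (t - s) * \<Phi> \<le> (y s - M) * exp (- a * (t - s))"
    by (simp add: mult.assoc flip: exp_add)
  also have "\<dots> \<le> (y s - M) * exp (- a * h)"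
    using M[of s] h t a by (intro mult_left_mono_neg) auto
  finally show ?thesis
    using t Phi mult_right_mono[of "t - s" h \<Phi>] by (simp add: algebra_simps)
qed

lemma delay_step_lower_bound:
  fixes y f :: "real \<Rightarrow> real"
  assumes a: "a > 0" and h: "h > 0"
    and dy: "\<And>\<tau>. \<tau> \<in> {s..s+h} \<Longrightarrow> (y has_real_derivative (a * (y (\<tau> - h) - y \<tau>) + f \<tau>)) (at \<tau>)"
    and m: "\<And>\<tau>. \<tau> \<in> {s-h..s} \<Longrightarrow> m \<le> y \<tau>"
    and F: "\<And>\<tau>. \<tau> \<in> {s..s+h} \<Longrightarrow> - \<Phi> \<le> f \<tau>" and Phi: "\<Phi> \<ge> 0"
    and t: "t \<in> {s..s+h}"
  shows "m - h * \<Phi> + exp (- a * h) * (y s - m) \<le> y t"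
proof -
  have "((\<lambda>t. - y t) has_real_derivative (a * (- y (\<tau> - h) - - y \<tau>) + - f \<tau>)) (at \<tau>)"
    if "\<tau> \<in> {s..s+h}" for \<tau>
    using dy[OF that] by (auto intro!: derivative_eq_intros simp: algebra_simps)
  moreover have "- y \<tau> \<le> - m" if "\<tau> \<in> {s-h..s}" for \<tau>
    using m[OF that] by simp
  moreover have "- f \<tau> \<le> \<Phi>" if "\<tau> \<in> {s..s+h}" for \<tau>
    using F[OF that] by simp
  ultimately have "- y t \<le> - m + h * \<Phi> - exp (- a * h) * (- m - - y s)"
    by (rule delay_step_upper_bound[OF a h _ _ _ Phi t])
  then show ?thesis by (simp add: algebra_simps)
qed

definition window_sup :: "real \<Rightarrow> (real \<Rightarrow> real) \<Rightarrow> real \<Rightarrow> real" where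
  "window_sup h y t = (SUP \<tau>\<in>{t-h..t}. y \<tau>)"

definition window_inf :: "real \<Rightarrow> (real \<Rightarrow> real) \<Rightarrow> real \<Rightarrow> real" where
  "window_inf h y t = (INF \<tau>\<in>{t-h..t}. y \<tau>)"

lemma bounded_window_image:
  assumes "continuous_on UNIV y"
  shows "bounded (y ` {a..b :: real})"
  using compact_continuous_image[OF continuous_on_subset[OF assms subset_UNIV] compact_Icc]
  by (rule compact_imp_bounded)

lemma window_sup_upper: "continuous_on UNIV y \<Longrightarrow> \<tau> \<in> {t-h..t} \<Longrightarrow> y \<tau> \<le> window_sup h y t"
  unfolding window_sup_def
  by (rule cSUP_upper) (auto intro: bounded_imp_bdd_above bounded_window_image)

lemma window_inf_lower: "continuous_on UNIV y \<Longrightarrow> \<tau> \<in> {t-h..t} \<Longrightarrow> window_inf h y t \<le> y \<tau>"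
  unfolding window_inf_def
  by (rule cINF_lower) (auto intro: bounded_imp_bdd_below bounded_window_image)

lemma window_sup_least: "h \<ge> 0 \<Longrightarrow> (\<And>\<tau>. \<tau> \<in> {t-h..t} \<Longrightarrow> y \<tau> \<le> B) \<Longrightarrow> window_sup h y t \<le> B"
  unfolding window_sup_def by (rule cSUP_least) auto

lemma window_inf_greatest: "h \<ge> 0 \<Longrightarrow> (\<And>\<tau>. \<tau> \<in> {t-h..t} \<Longrightarrow> B \<le> y \<tau>) \<Longrightarrow> B \<le> window_inf h y t"
  unfolding window_inf_def by (rule cINF_greatest) auto

definition window_osc :: "real \<Rightarrow> (real \<Rightarrow> real) \<Rightarrow> real \<Rightarrow> real" where
  "window_osc h y t = window_sup h y t - window_inf h y t"

lemma window_osc_le: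
  assumes "h \<ge> 0" and "\<And>\<tau>. \<tau> \<in> {t-h..t} \<Longrightarrow> \<bar>y \<tau>\<bar> \<le> B"
  shows "window_osc h y t \<le> 2 * B"
proof -
  have "y \<tau> \<le> B" "- B \<le> y \<tau>" if "\<tau> \<in> {t-h..t}" for \<tau>
    using assms(2)[OF that] by (simp_all add: abs_le_iff)
  then have "window_sup h y t \<le> B" "- B \<le> window_inf h y t"
    using assms(1) by (auto intro!: window_sup_least window_inf_greatest)
  then show ?thesis
    by (simp add: window_osc_def)
qed

lemma abs_delay_diff_le_window_osc:
  assumes "continuous_on UNIV y" and "h \<ge> 0"
  shows "\<bar>y t - y (t - h)\<bar> \<le> window_osc h y t"
proof -
  have "t \<in> {t-h..t}" "t - h \<in> {t-h..t}"
    using assms(2) by auto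
  then have "y t \<le> window_sup h y t" "y (t - h) \<le> window_sup h y t"
    "window_inf h y t \<le> y t" "window_inf h y t \<le> y (t - h)"
    by (simp_all only: window_sup_upper[OF assms(1)] window_inf_lower[OF assms(1)])
  then show ?thesis
    unfolding window_osc_def abs_le_iff by simp
qed

text \<open>Over one delay, \<open>y\<close> is pulled towards its past values: the new window stays away from
  the old maximum by \<open>exp (- a h) (M - y s)\<close> and from the old minimum by \<open>exp (- a h) (y s - m)\<close>,
  and these two gaps add up to a fixed fraction of the old width \<open>M - m\<close>.\<close>

lemma window_oscillation_contraction:
  fixes y f :: "real \<Rightarrow> real"
  assumes a: "a > 0" and h: "h > 0" and cy: "continuous_on UNIV y"
    and dy: "\<And>\<tau>. \<tau> \<in> {s..s+h} \<Longrightarrow> (y has_real_derivative (a * (y (\<tau> - h) - y \<tau>) + f \<tau>)) (at \<tau>)"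
    and F: "\<And>\<tau>. \<tau> \<in> {s..s+h} \<Longrightarrow> \<bar>f \<tau>\<bar> \<le> \<Phi>"
  shows "window_osc h y (s+h) \<le> (1 - exp (- a * h)) * window_osc h y s + 2 * h * \<Phi>"
proof -
  define M where "M = window_sup h y s"
  define m where "m = window_inf h y s"
  define E where "E = exp (- a * h)"
  have Phi: "\<Phi> \<ge> 0"
    using order_trans[OF abs_ge_zero F[of s]] h by simp
  have Fu: "f \<tau> \<le> \<Phi>" and Fl: "- \<Phi> \<le> f \<tau>" if "\<tau> \<in> {s..s+h}" for \<tau>
    using F[OF that] by (simp_all add: abs_le_iff)
  have yM: "\<And>\<tau>. \<tau> \<in> {s-h..s} \<Longrightarrow> y \<tau> \<le> M" and ym: "\<And>\<tau>. \<tau> \<in> {s-h..s} \<Longrightarrow> m \<le> y \<tau>"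
    unfolding M_def m_def using window_sup_upper window_inf_lower cy by blast+
  have "window_sup h y (s+h) \<le> M + h * \<Phi> - E * (M - y s)"
    using h delay_step_upper_bound[OF a h dy yM Fu Phi] by (auto simp: E_def intro!: window_sup_least)
  moreover have "m - h * \<Phi> + E * (y s - m) \<le> window_inf h y (s+h)"
    using h delay_step_lower_bound[OF a h dy ym Fl Phi] by (auto simp: E_def intro!: window_inf_greatest)
  ultimately have "window_sup h y (s+h) - window_inf h y (s+h)
      \<le> (M + h * \<Phi> - E * (M - y s)) - (m - h * \<Phi> + E * (y s - m))"
    by linarith
  also have "\<dots> = (1 - E) * (M - m) + 2 * h * \<Phi>"
    by (simp add: algebra_simps)
  finally show ?thesis unfolding window_osc_def M_def m_def E_def .
qed

text \<open>If \<open>oc 0\<close> exceeded \<open>D / (1 - \<theta> q)\<close>, the recurrence would make the excess grow like \<open>\<theta>\<^sup>-\<^sup>k\<close>.\<close>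

lemma backward_recurrence_bound:
  fixes oc :: "nat \<Rightarrow> real"
  assumes th: "0 < \<theta>" "\<theta> < 1" and q: "0 < q" "q \<le> 1" and D: "D \<ge> 0"
    and rec: "\<And>k. oc k \<le> \<theta> * oc (Suc k) + D * q ^ k"
    and bnd: "\<And>k. oc k \<le> B"
  shows "oc 0 \<le> D / (1 - \<theta> * q)"
proof (rule ccontr)
  define F where "F = D / (1 - \<theta> * q)"
  have "\<theta> * q \<le> \<theta>"
    using mult_left_mono[OF q(2), of \<theta>] th by simp
  then have "\<theta> * q < 1"
    using th by linarith
  then have FD: "D = F * (1 - \<theta> * q)" and F0: "F \<ge> 0"
    using D by (simp_all add: F_def)
  assume "\<not> oc 0 \<le> D / (1 - \<theta> * q)"
  then have E: "oc 0 - F > 0" unfolding F_def by simp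
  have growth: "oc j - F * q ^ j \<ge> (oc 0 - F) * (1 / \<theta>) ^ j" for j
  proof (induction j)
    case (Suc j)
    have "D * q ^ j = F * q ^ j - \<theta> * (F * q ^ Suc j)"
      unfolding FD by (simp add: algebra_simps)
    then have "oc j - F * q ^ j \<le> \<theta> * (oc (Suc j) - F * q ^ Suc j)"
      using rec[of j] by (simp add: algebra_simps)
    then have "(oc 0 - F) * (1 / \<theta>) ^ j / \<theta> \<le> oc (Suc j) - F * q ^ Suc j"
      using Suc.IH th by (simp add: pos_divide_le_eq mult.commute)
    then show ?case
      by (simp add: power_Suc2)
  qed simp
  obtain j where "B / (oc 0 - F) < (1 / \<theta>) ^ j"
    using real_arch_pow[of "1 / \<theta>" "B / (oc 0 - F)"] th by auto
  then have "B < (oc 0 - F) * (1 / \<theta>) ^ j"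
    using E by (simp add: pos_divide_less_eq mult.commute)
  also have "\<dots> \<le> oc j"
  proof -
    have "F * q ^ j \<ge> 0" using F0 q by simp
    then show ?thesis using growth[of j] by linarith
  qed
  finally show False using bnd[of j] by simp
qed

lemma delay_oscillation_decay:
  fixes y f :: "real \<Rightarrow> real"
  assumes a: "a > 0" and h: "h > 0" and lam: "lam > 0"
    and dy: "\<And>t. (y has_real_derivative (a * (y (t - h) - y t) + f t)) (at t)"
    and f: "\<And>t. t \<le> T \<Longrightarrow> \<bar>f t\<bar> \<le> \<Phi> * exp (lam * t)"
    and y: "\<And>t. t \<le> T \<Longrightarrow> \<bar>y t\<bar> \<le> B"
  obtains G where "\<And>t. t \<le> T \<Longrightarrow> \<bar>y t - y (t - h)\<bar> \<le> G * exp (lam * t)"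
proof
  define \<theta> where "\<theta> = 1 - exp (- a * h)"
  define q where "q = exp (- lam * h)"
  have th: "0 < \<theta>" "\<theta> < 1" and q: "0 < q" "q \<le> 1"
    using a h lam by (simp_all add: \<theta>_def q_def)
  have Phi: "\<Phi> \<ge> 0"
    using nonneg_if_abs_le_mult_exp[OF f[OF order_refl]] .
  have cy: "continuous_on UNIV y"
    using dy by (meson DERIV_continuous continuous_at_imp_continuous_on)
  fix t assume t: "t \<le> T"
  define oc where "oc k = window_osc h y (t - real k * h)" for k
  have "oc k \<le> \<theta> * oc (Suc k) + (2 * h * \<Phi> * exp (lam * t)) * q ^ k" for k
  proof -
    define s where "s = t - real (Suc k) * h"
    have sh: "s + h = t - real k * h"
      by (simp add: s_def algebra_simps)
    have "real k * h \<ge> 0"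
      using h by simp
    then have sT: "s + h \<le> T"
      using t sh by linarith
    have "\<bar>f \<tau>\<bar> \<le> \<Phi> * exp (lam * (s + h))" if "\<tau> \<in> {s..s+h}" for \<tau>
    proof -
      have "\<Phi> * exp (lam * \<tau>) \<le> \<Phi> * exp (lam * (s + h))"
        using that lam Phi by (auto intro!: mult_left_mono)
      then show ?thesis
        using f[of \<tau>] that sT by simp
    qed
    then have "oc k \<le> \<theta> * oc (Suc k) + 2 * h * (\<Phi> * exp (lam * (s + h)))"
      using window_oscillation_contraction[OF a h cy dy]
      by (simp only: oc_def \<theta>_def s_def[symmetric] sh[symmetric])
    moreover have "exp (lam * (s + h)) = exp (lam * t) * q ^ k"
      unfolding sh by (simp add: q_def algebra_simps flip: exp_add exp_of_nat_mult)
    ultimately show ?thesis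
      by (simp add: mult_ac)
  qed
  moreover have "oc k \<le> 2 * B" for k
  proof -
    have "\<bar>y \<tau>\<bar> \<le> B" if "\<tau> \<in> {t - real k * h - h..t - real k * h}" for \<tau>
    proof (rule y)
      have "real k * h \<ge> 0"
        using h by simp
      then show "\<tau> \<le> T"
        using that t unfolding atLeastAtMost_iff by linarith
    qed
    then show ?thesis
      unfolding oc_def using h by (intro window_osc_le) auto
  qed
  ultimately have "oc 0 \<le> 2 * h * \<Phi> * exp (lam * t) / (1 - \<theta> * q)"
    by (intro backward_recurrence_bound th q) (use h Phi in auto)
  then show "\<bar>y t - y (t - h)\<bar> \<le> 2 * h * \<Phi> / (1 - \<theta> * q) * exp (lam * t)"
    using abs_delay_diff_le_window_osc[OF cy, of h t] h by (simp add: oc_def)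
qed

section \<open>Growth and limits at \<open>-\<infinity>\<close>\<close>

lemma bounded_above_if_shift_mono:
  fixes P :: "real \<Rightarrow> real"
  assumes h: "h > 0" and cP: "continuous_on {T..T+h} P"
    and mono: "\<And>s. s \<le> T \<Longrightarrow> P s \<le> P (s + h)"
  obtains M where "\<And>s. s \<le> T + h \<Longrightarrow> P s \<le> M"
proof -
  define M where "M = (SUP s\<in>{T..T+h}. P s)"
  have "bdd_above (P ` {T..T+h})"
    by (intro bounded_imp_bdd_above compact_imp_bounded compact_continuous_image cP compact_Icc)
  then have M: "P s \<le> M" if "s \<in> {T..T+h}" for s
    unfolding M_def using that by (rule cSUP_upper2) simp
  have "P s \<le> M" if "T - real n * h \<le> s" "s \<le> T + h" for n s
    using that
  proof (induction n arbitrary: s)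
    case (Suc n)
    show ?case
    proof (cases "s \<le> T")
      case True
      have "T - real n * h \<le> s + h"
        using Suc.prems(1) by (simp add: algebra_simps)
      then have "P (s + h) \<le> M"
        using Suc.IH True h by simp
      then show ?thesis
        using mono[OF True] by linarith
    qed (use M Suc.prems in simp)
  qed (use M in simp)
  moreover have "\<exists>n::nat. T - real n * h \<le> s" for s
    using real_arch_simple[of "(T - s) / h"] h by (auto simp: field_simps)
  ultimately show ?thesis
    using that by blast
qed

lemma exp_corrected_antimono_if_deriv_le:
  fixes y y' :: "real \<Rightarrow> real"
  assumes lam: "lam > 0"
    and dy: "\<And>t. t \<le> T \<Longrightarrow> (y has_real_derivative y' t) (at t)"
    and y': "\<And>t. t \<le> T \<Longrightarrow> y' t \<le> G * exp (lam * t)"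
    and st: "s \<le> t" "t \<le> T"
  shows "y t - G / lam * exp (lam * t) \<le> y s - G / lam * exp (lam * s)"
proof (rule DERIV_nonpos_imp_nonincreasing[OF st(1), of "\<lambda>\<sigma>. y \<sigma> - G / lam * exp (lam * \<sigma>)"])
  fix \<sigma> assume "s \<le> \<sigma>" "\<sigma> \<le> t"
  then have \<sigma>: "\<sigma> \<le> T" using st by simp
  have "((\<lambda>\<sigma>. y \<sigma> - G / lam * exp (lam * \<sigma>)) has_real_derivative y' \<sigma> - G * exp (lam * \<sigma>)) (at \<sigma>)"
    using lam by (auto intro!: derivative_eq_intros dy[OF \<sigma>])
  moreover have "y' \<sigma> - G * exp (lam * \<sigma>) \<le> 0"
    using y'[OF \<sigma>] by simp
  ultimately show "\<exists>d. ((\<lambda>\<sigma>. y \<sigma> - G / lam * exp (lam * \<sigma>)) has_real_derivative d) (at \<sigma>) \<and> d \<le> 0"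
    by blast
qed

lemma converges_at_bot_if_deriv_exp_bounded:
  fixes y y' :: "real \<Rightarrow> real"
  assumes lam: "lam > 0"
    and dy: "\<And>t. t \<le> T \<Longrightarrow> (y has_real_derivative y' t) (at t)"
    and y': "\<And>t. t \<le> T \<Longrightarrow> \<bar>y' t\<bar> \<le> G * exp (lam * t)"
  obtains c where "\<And>t. t \<le> T \<Longrightarrow> \<bar>y t - c\<bar> \<le> G / lam * exp (lam * t)"
proof
  define v where "v \<sigma> = y \<sigma> - G / lam * exp (lam * \<sigma>)" for \<sigma>
  define w where "w \<sigma> = y \<sigma> + G / lam * exp (lam * \<sigma>)" for \<sigma>
  have G: "G \<ge> 0"
    using nonneg_if_abs_le_mult_exp[OF y'[OF order_refl]] .
  have v_mono: "v t \<le> v s" if "s \<le> t" "t \<le> T" for s t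
    unfolding v_def using y' by (intro exp_corrected_antimono_if_deriv_le[OF lam dy _ that]) (auto simp: abs_le_iff)
  have w_mono: "w s \<le> w t" if "s \<le> t" "t \<le> T" for s t
  proof -
    have "((\<lambda>t. - y t) has_real_derivative - y' t) (at t)" if "t \<le> T" for t
      using dy[OF that] by (rule DERIV_minus)
    moreover have "- y' t \<le> G * exp (lam * t)" if "t \<le> T" for t
      using y'[OF that] by (simp add: abs_le_iff)
    ultimately have "- y t - G / lam * exp (lam * t) \<le> - y s - G / lam * exp (lam * s)"
      by (rule exp_corrected_antimono_if_deriv_le[OF lam _ _ that])
    then show ?thesis
      by (simp add: w_def)
  qed
  have vw: "v s \<le> w s" for s
    using G lam by (simp add: v_def w_def)
  define c where "c = (SUP s\<in>{..T}. v s)"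
  have bdd: "bdd_above (v ` {..T})"
  proof (rule bdd_aboveI[of _ "w T"])
    fix x assume "x \<in> v ` {..T}"
    then obtain s where "s \<le> T" "x = v s" by auto
    then show "x \<le> w T" using vw[of s] w_mono[of s T] by simp
  qed
  fix t assume t: "t \<le> T"
  have "v t \<le> c"
    unfolding c_def by (rule cSUP_upper[OF _ bdd]) (use t in auto)
  moreover have "c \<le> w t"
    unfolding c_def
  proof (rule cSUP_least)
    fix s assume s: "s \<in> {..T}"
    show "v s \<le> w t"
    proof (cases "s \<le> t")
      case True
      then show ?thesis using vw[of s] w_mono[OF True t] by linarith
    next
      case False
      then have "v s \<le> v t" using v_mono[of t s] s by simp
      then show ?thesis using vw[of t] by linarith
    qed
  qed simp
  ultimately show "\<bar>y t - c\<bar> \<le> G / lam * exp (lam * t)"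
    by (simp add: v_def w_def abs_le_iff)
qed

lemma shifted_exp_expansion_bigo:
  fixes F :: "real \<Rightarrow> real"
  assumes c: "c > 0" and lam: "lam > 0" and d: "\<delta> > 0" and M: "M \<ge> 0"
    and F: "\<And>t. t \<le> T \<Longrightarrow> \<bar>F t - A * c * exp (lam * t)\<bar> \<le> M * exp (2 * lam * t)"
  shows "(\<lambda>t. F (t - ln c / lam) - A * exp (lam * t)) \<in> O[at_bot](\<lambda>t. exp ((2 * lam - \<delta>) * t))"
proof (rule bigoI)
  define t0 where "t0 = ln c / lam"
  have "norm (F (t - t0) - A * exp (lam * t)) \<le> M / c\<^sup>2 * norm (exp ((2 * lam - \<delta>) * t))"
    if t: "t \<le> min (T + t0) 0" for t
  proof -
    have "exp (ln c * 2) = c * c"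
      using c exp_add[of "ln c" "ln c"] by (simp add: mult.commute)
    then have "c * exp (lam * (t - t0)) = exp (lam * t)" "exp (2 * lam * (t - t0)) = exp (2 * lam * t) / c\<^sup>2"
      using c lam by (simp_all add: t0_def algebra_simps exp_diff power2_eq_square)
    moreover have "\<bar>F (t - t0) - A * c * exp (lam * (t - t0))\<bar> \<le> M * exp (2 * lam * (t - t0))"
      using F[of "t - t0"] t by simp
    moreover have "exp (2 * lam * t) \<le> exp ((2 * lam - \<delta>) * t)"
      using t d by (simp add: algebra_simps mult_le_0_iff)
    ultimately show ?thesis
      using M c by (simp add: mult.assoc divide_right_mono mult_left_mono order_trans)
  qed
  then show "\<forall>\<^sub>F t in at_bot. norm (F (t - ln c / lam) - A * exp (lam * t))
      \<le> M / c\<^sup>2 * norm (exp ((2 * lam - \<delta>) * t))"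
    unfolding eventually_at_bot_linorder t0_def by blast
qed

section \<open>The nonlinearity near \<open>0\<close>\<close>

lemma linearization_error_bound:
  fixes g g' :: "real \<Rightarrow> real"
  assumes g': "\<And>x. x \<ge> 0 \<Longrightarrow> (g has_real_derivative g' x) (at x within {0..})"
    and lip: "\<And>s. s \<in> {0..e} \<Longrightarrow> \<bar>g' s - p\<bar> \<le> B * s" and B: "B \<ge> 0"
    and x: "x \<in> {0..e}" and y: "y \<in> {0..e}"
  shows "\<bar>g x - g y - p * (x - y)\<bar> \<le> B * max x y * \<bar>x - y\<bar>"
proof -
  have ordered: "\<bar>g x - g y - p * (x - y)\<bar> \<le> B * x * (x - y)"
    if "0 \<le> y" "y \<le> x" "x \<le> e" for x y
  proof -
    define k where "k s = g s - p * s" for s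
    have "\<exists>z\<in>{y..x}. k x - k y = (\<lambda>d. d * (g' z - p)) (x - y)"
    proof (rule mvt_very_simple[OF \<open>y \<le> x\<close>])
      fix z assume "y \<le> z" "z \<le> x"
      then have "(g has_real_derivative g' z) (at z within {y..x})"
        using that by (intro DERIV_subset[OF g']) auto
      then have "(k has_real_derivative g' z - p) (at z within {y..x})"
        unfolding k_def by (auto intro!: derivative_eq_intros)
      then show "(k has_derivative (\<lambda>d. d * (g' z - p))) (at z within {y..x})"
        by (simp add: has_field_derivative_def mult_commute_abs)
    qed
    then obtain z where z: "z \<in> {y..x}" "g x - g y - p * (x - y) = (x - y) * (g' z - p)"
      by (auto simp: k_def algebra_simps)
    have "\<bar>g' z - p\<bar> \<le> B * z"
      using lip[of z] z that by simp
    also have "\<dots> \<le> B * x"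
      using z B by (intro mult_left_mono) auto
    finally have "\<bar>g' z - p\<bar> \<le> B * x" .
    then show ?thesis
      using z that by (simp add: abs_mult mult_left_mono mult.commute)
  qed
  show ?thesis
  proof (cases "y \<le> x")
    case True
    then show ?thesis using ordered[of y x] x y by simp
  next
    case False
    then show ?thesis
      using ordered[of x y] x y by (simp add: abs_minus_commute algebra_simps max_def)
  qed
qed

lemma lipschitz_at_0_if_deriv_bounded:
  fixes g' g'' :: "real \<Rightarrow> real"
  assumes eps: "\<epsilon> > 0"
    and d: "\<forall>s\<in>{0..<\<epsilon>}. (g' has_real_derivative g'' s) (at s within {0..})"
    and bd: "bounded (g'' ` {0..<\<epsilon>})"
  shows "\<exists>e>0. \<exists>B\<ge>0. \<forall>s\<in>{0..e}. \<bar>g' s - g' 0\<bar> \<le> B * s"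
proof -
  obtain B0 where "\<forall>x\<in>g'' ` {0..<\<epsilon>}. norm x \<le> B0"
    using bd unfolding bounded_iff by blast
  then obtain B where B: "B \<ge> 0" "\<And>s. s \<in> {0..<\<epsilon>} \<Longrightarrow> \<bar>g'' s\<bar> \<le> B"
    by (intro that[of "max B0 0"]) (auto simp: le_max_iff_disj)
  have "\<bar>g' s - g' 0\<bar> \<le> B * s" if s: "s \<in> {0..\<epsilon>/2}" for s
  proof -
    have "\<exists>z\<in>{0..s}. g' s - g' 0 = (\<lambda>d. d * g'' z) (s - 0)"
    proof (rule mvt_very_simple)
      fix z assume "0 \<le> z" "z \<le> s"
      then have "(g' has_real_derivative g'' z) (at z within {0..s})"
        using s eps by (intro DERIV_subset[OF d[rule_format]]) auto
      then show "(g' has_derivative (\<lambda>d. d * g'' z)) (at z within {0..s})"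
        by (simp add: has_field_derivative_def mult_commute_abs)
    qed (use s in simp)
    then obtain z where z: "z \<in> {0..s}" "g' s - g' 0 = s * g'' z"
      by auto
    have "\<bar>g'' z\<bar> \<le> B"
      using B(2)[of z] z s eps by simp
    then show ?thesis
      using z(2) s mult_left_mono[of "\<bar>g'' z\<bar>" B s] by (simp add: abs_mult mult.commute)
  qed
  then show ?thesis
    using eps B(1) by (intro exI[of _ "\<epsilon>/2"] exI[of _ B]) auto
qed

lemma lipschitz_at_0_if_deriv_tendsto:
  fixes g' g'' :: "real \<Rightarrow> real"
  assumes g'_cont: "continuous_on {0..} g'" and eps: "\<epsilon> > 0"
    and d: "\<forall>s\<in>{0<..<\<epsilon>}. (g' has_real_derivative g'' s) (at s)"
    and lim: "(g'' \<longlongrightarrow> L) (at_right 0)"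
  shows "\<exists>e>0. \<exists>B\<ge>0. \<forall>s\<in>{0..e}. \<bar>g' s - g' 0\<bar> \<le> B * s"
proof -
  obtain b where b: "b > 0" "\<And>s. 0 < s \<Longrightarrow> s < b \<Longrightarrow> dist (g'' s) L < 1"
    using tendstoD[OF lim, of 1] by (auto simp: eventually_at_right_field)
  define e where "e = min \<epsilon> b / 2"
  have e: "e > 0" "e < \<epsilon>" "e < b"
    using eps b by (auto simp: e_def)
  have pos: "\<bar>g' s - g' 0\<bar> \<le> (\<bar>L\<bar> + 1) * s" if s: "s \<in> {0<..e}" for s
  proof -
    have "\<exists>l z. 0 < z \<and> z < s \<and> DERIV g' z :> l \<and> g' s - g' 0 = (s - 0) * l"
    proof (rule MVT)
      show "continuous_on {0..s} g'"
        by (rule continuous_on_subset[OF g'_cont]) auto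
      show "g' differentiable (at z)" if "0 < z" "z < s" for z
        using d[rule_format, of z] that s e by (auto simp: real_differentiable_def)
    qed (use s in simp)
    then obtain l z where z: "0 < z" "z < s" "DERIV g' z :> l" "g' s - g' 0 = s * l"
      by auto
    have "l = g'' z"
      using DERIV_unique[OF z(3) d[rule_format, of z]] z s e by simp
    then have "\<bar>l\<bar> \<le> \<bar>L\<bar> + 1"
      using b(2)[of z] z s e by (simp add: dist_real_def)
    then show ?thesis
      using z(4) s mult_left_mono[of "\<bar>l\<bar>" "\<bar>L\<bar> + 1" s] by (simp add: abs_mult mult.commute)
  qed
  have "\<bar>g' s - g' 0\<bar> \<le> (\<bar>L\<bar> + 1) * s" if "s \<in> {0..e}" for s
    using that pos[of s] by (cases "s = 0") auto
  moreover have "\<bar>L\<bar> + 1 \<ge> 0"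
    by simp
  ultimately show ?thesis
    using e(1) by blast
qed

section \<open>Asymptotics and uniqueness of fronts\<close>

locale delay_front =
  fixes g \<psi> :: "real \<Rightarrow> real" and h K p lam C e :: real
  assumes h_pos: "h > 0" and K_pos: "K > 0" and g0: "g 0 = 0"
    and front: "connecting_solution g h K \<psi>"
    and lam_pos: "lam > 0" and char_eq: "p * exp (- lam * h) = 1 + lam"
    and e_pos: "e > 0" and C_nonneg: "C \<ge> 0"
    and linearization: "\<And>x y. x \<in> {0..e} \<Longrightarrow> y \<in> {0..e} \<Longrightarrow>
      \<bar>g x - g y - p * (x - y)\<bar> \<le> C * max x y * \<bar>x - y\<bar>"
begin

lemma psi_nonneg: "\<psi> t \<ge> 0"
  using front by (simp add: connecting_solution_def)

lemma psi_deriv: "(\<psi> has_real_derivative (- \<psi> t + g (\<psi> (t - h)))) (at t)"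
  using front by (simp add: connecting_solution_def)

lemma psi_at_bot: "(\<psi> \<longlongrightarrow> 0) at_bot"
  using front by (simp add: connecting_solution_def)

lemma psi_at_top: "(\<psi> \<longlongrightarrow> K) at_top"
  using front by (simp add: connecting_solution_def)

lemma psi_small_at_bot: "\<epsilon> > 0 \<Longrightarrow> \<exists>T. \<forall>t\<le>T. \<psi> t \<le> \<epsilon>"
  using order_tendstoD(2)[OF psi_at_bot] unfolding eventually_at_bot_linorder by (meson less_imp_le)

lemma exp_lam_delay: "exp (lam * (t - h)) = exp (- lam * h) * exp (lam * t)"
  by (simp add: algebra_simps flip: exp_add)

lemma p_pos: "p > 0"
proof -
  have "p * exp (- lam * h) > 0"
    using char_eq lam_pos by simp
  then show ?thesis
    by (simp add: zero_less_mult_iff)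
qed

lemma g_quadratic: "x \<in> {0..e} \<Longrightarrow> \<bar>g x - p * x\<bar> \<le> C * x\<^sup>2"
  using linearization[of x 0] e_pos by (simp add: g0 power2_eq_square)

definition scaled :: "real \<Rightarrow> real" where
  "scaled t = \<psi> t * exp (- lam * t)"

definition forcing :: "real \<Rightarrow> real" where
  "forcing t = (g (\<psi> (t - h)) - p * \<psi> (t - h)) * exp (- lam * t)"

lemma scaled_nonneg: "scaled t \<ge> 0"
  by (simp add: scaled_def psi_nonneg)

lemma psi_eq_scaled: "\<psi> t = scaled t * exp (lam * t)"
  by (simp add: scaled_def mult.assoc flip: exp_add)

lemma scaled_deriv:
  "(scaled has_real_derivative (1 + lam) * (scaled (t - h) - scaled t) + forcing t) (at t)"
proof -
  have "(scaled has_real_derivative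
      (- \<psi> t + g (\<psi> (t - h))) * exp (- lam * t) + \<psi> t * (exp (- lam * t) * - lam)) (at t)"
    unfolding scaled_def[abs_def] by (auto intro!: derivative_eq_intros psi_deriv)
  moreover have "(1 + lam) * scaled (t - h) = p * \<psi> (t - h) * exp (- lam * t)"
    by (simp add: scaled_def flip: char_eq) (simp add: algebra_simps flip: exp_add)
  then have "(- \<psi> t + g (\<psi> (t - h))) * exp (- lam * t) + \<psi> t * (exp (- lam * t) * - lam)
      = (1 + lam) * (scaled (t - h) - scaled t) + forcing t"
    by (simp add: scaled_def forcing_def algebra_simps)
  ultimately show ?thesis
    by simp
qed

lemma continuous_scaled: "continuous_on UNIV scaled"
  using scaled_deriv by (meson DERIV_continuous continuous_at_imp_continuous_on)

lemma forcing_bound: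
  assumes "\<psi> (t - h) \<le> e"
  shows "\<bar>forcing t\<bar> \<le> C * exp (- lam * h) * \<psi> (t - h) * scaled (t - h)"
    and "scaled (t - h) \<le> b \<Longrightarrow> \<bar>forcing t\<bar> \<le> C * exp (- lam * h) * b ^ 2 * exp (lam * (t - h))"
proof -
  have "\<bar>forcing t\<bar> \<le> C * \<psi> (t - h) ^ 2 * exp (- lam * t)"
    using g_quadratic[of "\<psi> (t - h)"] assms psi_nonneg
    by (simp add: forcing_def abs_mult mult_right_mono)
  moreover have "exp (- lam * t) = exp (- lam * h) * exp (- lam * (t - h))"
    by (simp add: algebra_simps flip: exp_add)
  ultimately show first: "\<bar>forcing t\<bar> \<le> C * exp (- lam * h) * \<psi> (t - h) * scaled (t - h)"
    by (simp add: scaled_def power2_eq_square mult_ac)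
  assume "scaled (t - h) \<le> b"
  then have "scaled (t - h) ^ 2 \<le> b ^ 2"
    using scaled_nonneg by (rule power_mono)
  then have "C * exp (- lam * h) * scaled (t - h) ^ 2 * exp (lam * (t - h))
      \<le> C * exp (- lam * h) * b ^ 2 * exp (lam * (t - h))"
    using C_nonneg by (intro mult_right_mono mult_left_mono) auto
  with first show "\<bar>forcing t\<bar> \<le> C * exp (- lam * h) * b ^ 2 * exp (lam * (t - h))"
    by (simp add: psi_eq_scaled[of "t - h"] power2_eq_square mult_ac)
qed

definition scaled_prim :: "real \<Rightarrow> real" where
  "scaled_prim = (SOME U. \<forall>t. (U has_real_derivative scaled t) (at t))"

lemma scaled_prim_deriv: "(scaled_prim has_real_derivative scaled t) (at t)"
  using someI_ex[OF exists_antiderivative[OF continuous_scaled]] by (simp add: scaled_prim_def)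

lemma scaled_prim_delay_deriv: "((\<lambda>t. scaled_prim (t - h)) has_real_derivative scaled (t - h)) (at t)"
  using DERIV_shift[of scaled_prim "scaled (t - h)" t "- h"] scaled_prim_deriv[of "t - h"] by simp

lemma scaled_prim_window_nonneg: "scaled_prim t - scaled_prim (t - h) \<ge> 0"
proof -
  have "scaled_prim (t - h) \<le> scaled_prim t"
    by (rule DERIV_nonneg_imp_nondecreasing[of "t - h"]) (use h_pos scaled_prim_deriv scaled_nonneg in auto)
  then show ?thesis by simp
qed

text \<open>Adding \<open>1 + lam\<close> times the integral of \<open>scaled\<close> over the last delay interval cancels the
  linear part of the equation for \<open>scaled\<close>.\<close>

definition averaged :: "real \<Rightarrow> real" where
  "averaged t = scaled t + (1 + lam) * (scaled_prim t - scaled_prim (t - h))"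

lemma averaged_deriv: "(averaged has_real_derivative forcing t) (at t)"
proof -
  have "(averaged has_real_derivative ((1 + lam) * (scaled (t - h) - scaled t) + forcing t)
      + (1 + lam) * (scaled t - scaled (t - h))) (at t)"
    unfolding averaged_def[abs_def]
    by (auto intro!: derivative_eq_intros scaled_deriv scaled_prim_deriv scaled_prim_delay_deriv)
  then show ?thesis by (simp add: algebra_simps)
qed

lemma scaled_le_averaged: "scaled t \<le> averaged t"
  using scaled_prim_window_nonneg[of t] lam_pos by (simp add: averaged_def)

lemma scaled_prim_window_le_averaged: "(1 + lam) * (scaled_prim t - scaled_prim (t - h)) \<le> averaged t"
  using scaled_nonneg[of t] by (simp add: averaged_def)

text \<open>Where \<open>\<psi>\<close> is small the forcing is dominated by the window integral, so over one delay
  \<open>averaged\<close> can shrink at most by the factor \<open>exp (- lam h / 4)\<close>.\<close>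

lemma averaged_shift_lower_bound:
  "\<exists>T. \<forall>s\<le>T. averaged s * exp (- (lam / 4) * h) \<le> averaged (s + h)"
proof -
  define \<eta> where "\<eta> = (1 + lam) * (1 - exp (- (lam / 4) * h))"
  define CE where "CE = C * exp (- lam * h)"
  have eta: "\<eta> > 0" and CE: "CE \<ge> 0"
    using lam_pos h_pos C_nonneg by (simp_all add: \<eta>_def CE_def)
  define \<epsilon> where "\<epsilon> = min e (\<eta> / (CE + 1))"
  have eps: "\<epsilon> > 0" "\<epsilon> \<le> e" "CE * \<epsilon> \<le> \<eta>"
    using e_pos eta CE by (auto simp: \<epsilon>_def field_simps min_def)
  obtain T where T: "\<And>t. t \<le> T \<Longrightarrow> \<psi> t \<le> \<epsilon>"
    using psi_small_at_bot[OF eps(1)] by blast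
  have "averaged s * exp (- (lam / 4) * h) \<le> averaged (s + h)" if s: "s \<le> T" for s
  proof -
    define k where "k \<tau> = averaged \<tau> + CE * \<epsilon> * scaled_prim (\<tau> - h)" for \<tau>
    have "k s \<le> k (s + h)"
    proof (rule DERIV_nonneg_imp_nondecreasing[of s "s + h" k])
      fix \<tau> assume \<tau>: "s \<le> \<tau>" "\<tau> \<le> s + h"
      then have small: "\<psi> (\<tau> - h) \<le> \<epsilon>" using T s by simp
      have "C * exp (- lam * h) * \<psi> (\<tau> - h) * scaled (\<tau> - h) \<le> CE * \<epsilon> * scaled (\<tau> - h)"
        unfolding CE_def using small C_nonneg scaled_nonneg by (intro mult_right_mono mult_left_mono) auto
      then have "\<bar>forcing \<tau>\<bar> \<le> CE * \<epsilon> * scaled (\<tau> - h)"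
        using forcing_bound(1)[of \<tau>] small eps by linarith
      moreover have "(k has_real_derivative forcing \<tau> + CE * \<epsilon> * scaled (\<tau> - h)) (at \<tau>)"
        unfolding k_def by (auto intro!: derivative_eq_intros averaged_deriv scaled_prim_delay_deriv)
      ultimately show "\<exists>d. DERIV k \<tau> :> d \<and> d \<ge> 0"
        by force
    qed (use h_pos in simp)
    then have "averaged s \<le> averaged (s + h) + CE * \<epsilon> * (scaled_prim s - scaled_prim (s - h))"
      by (simp add: k_def algebra_simps)
    also have "\<dots> \<le> averaged (s + h) + \<eta> * (scaled_prim s - scaled_prim (s - h))"
      using eps scaled_prim_window_nonneg[of s] by (simp add: mult_right_mono)
    also have "\<dots> \<le> averaged (s + h) + (1 - exp (- (lam / 4) * h)) * averaged s"
      using scaled_prim_window_le_averaged[of s] h_pos lam_pos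
      by (simp add: \<eta>_def mult.assoc mult_left_mono)
    finally show ?thesis
      by (simp add: algebra_simps)
  qed
  then show ?thesis by blast
qed

lemma averaged_growth_at_bot: "\<exists>M T. \<forall>t\<le>T. averaged t \<le> M * exp (- (lam / 4) * t)"
proof -
  obtain T where T: "\<And>s. s \<le> T \<Longrightarrow> averaged s * exp (- (lam / 4) * h) \<le> averaged (s + h)"
    using averaged_shift_lower_bound by blast
  define P where "P s = averaged s * exp (lam / 4 * s)" for s
  have "continuous_on {T..T+h} P"
    unfolding P_def using averaged_deriv
    by (intro continuous_intros continuous_at_imp_continuous_on) (auto dest: DERIV_continuous)
  moreover have "P s \<le> P (s + h)" if "s \<le> T" for s
  proof -
    have "exp (- (lam / 4) * h) * exp (lam / 4 * (s + h)) = exp (lam / 4 * s)"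
      by (simp add: algebra_simps flip: exp_add)
    then show ?thesis
      using mult_right_mono[OF T[OF that], of "exp (lam / 4 * (s + h))"] by (simp add: P_def mult.assoc)
  qed
  ultimately obtain M where M: "\<And>s. s \<le> T + h \<Longrightarrow> P s \<le> M"
    using bounded_above_if_shift_mono[OF h_pos] by blast
  have "averaged t \<le> M * exp (- (lam / 4) * t)" if "t \<le> T + h" for t
    using mult_right_mono[OF M[OF that], of "exp (- (lam / 4) * t)"]
    by (simp add: P_def mult.assoc flip: exp_add)
  then show ?thesis by blast
qed

lemma scaled_bounded_at_bot: "\<exists>B T. \<forall>t\<le>T. scaled t \<le> B"
proof -
  obtain M T1 where M: "\<And>t. t \<le> T1 \<Longrightarrow> averaged t \<le> M * exp (- (lam / 4) * t)"
    using averaged_growth_at_bot by blast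
  obtain T2 where T2: "\<And>t. t \<le> T2 \<Longrightarrow> \<psi> t \<le> e"
    using psi_small_at_bot[OF e_pos] by blast
  define T where "T = min T1 T2"
  define G where "G = C * exp (- lam * h) * M\<^sup>2 * exp (- (lam / 2) * h)"
  have "\<bar>forcing \<tau>\<bar> \<le> G * exp (lam / 2 * \<tau>)" if "\<tau> \<le> T" for \<tau>
  proof -
    have \<tau>: "\<tau> - h \<le> T1" "\<tau> - h \<le> T2"
      using that h_pos by (auto simp: T_def)
    have "scaled (\<tau> - h) \<le> M * exp (- (lam / 4) * (\<tau> - h))"
      using scaled_le_averaged M[OF \<tau>(1)] by (rule order_trans)
    then have "\<bar>forcing \<tau>\<bar> \<le> C * exp (- lam * h) * (M * exp (- (lam / 4) * (\<tau> - h))) ^ 2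
        * exp (lam * (\<tau> - h))"
      by (rule forcing_bound(2)[OF T2[OF \<tau>(2)]])
    also have "\<dots> = G * exp (lam / 2 * \<tau>)"
    proof -
      have "exp (- (lam / 4) * (\<tau> - h)) ^ 2 * exp (lam * (\<tau> - h))
          = exp (- (lam / 2) * h) * exp (lam / 2 * \<tau>)"
        by (simp add: power2_eq_square flip: exp_add) (simp add: field_simps)
      then show ?thesis
        by (simp add: G_def power_mult_distrib mult_ac)
    qed
    finally show ?thesis .
  qed
  with averaged_deriv obtain c where c: "\<And>t. t \<le> T \<Longrightarrow> \<bar>averaged t - c\<bar> \<le> G / (lam / 2) * exp (lam / 2 * t)"
    using converges_at_bot_if_deriv_exp_bounded[of "lam / 2" T averaged forcing G] lam_pos by auto
  have "scaled t \<le> c + G / (lam / 2) * exp (lam / 2 * T)" if "t \<le> T" for t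
  proof -
    have "G / (lam / 2) * exp (lam / 2 * t) \<le> G / (lam / 2) * exp (lam / 2 * T)"
      using that lam_pos C_nonneg by (intro mult_left_mono) (auto simp: G_def)
    then show ?thesis
      using c[OF that] scaled_le_averaged[of t] by (simp add: abs_le_iff)
  qed
  then show ?thesis by blast
qed

lemma scaled_converges: "\<exists>c G T. \<forall>t\<le>T. \<bar>scaled t - c\<bar> \<le> G * exp (lam * t)"
proof -
  obtain B T1 where B: "\<And>t. t \<le> T1 \<Longrightarrow> scaled t \<le> B"
    using scaled_bounded_at_bot by blast
  obtain T2 where T2: "\<And>t. t \<le> T2 \<Longrightarrow> \<psi> t \<le> e"
    using psi_small_at_bot[OF e_pos] by blast
  define T where "T = min T1 T2"
  define \<Phi> where "\<Phi> = C * exp (- lam * h) * B\<^sup>2 * exp (- lam * h)"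
  have f: "\<bar>forcing t\<bar> \<le> \<Phi> * exp (lam * t)" if "t \<le> T" for t
  proof -
    have t: "t - h \<le> T1" "t - h \<le> T2"
      using that h_pos by (auto simp: T_def)
    have "\<bar>forcing t\<bar> \<le> C * exp (- lam * h) * B ^ 2 * exp (lam * (t - h))"
      by (rule forcing_bound(2)[OF T2[OF t(2)] B[OF t(1)]])
    then show ?thesis
      by (simp add: \<Phi>_def exp_lam_delay mult_ac)
  qed
  have "\<bar>scaled t\<bar> \<le> B" if "t \<le> T" for t
    using B[of t] that scaled_nonneg[of t] by (simp add: T_def)
  then obtain G0 where G0: "\<And>t. t \<le> T \<Longrightarrow> \<bar>scaled t - scaled (t - h)\<bar> \<le> G0 * exp (lam * t)"
    using delay_oscillation_decay[of "1 + lam" h lam scaled forcing T \<Phi> B] f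
      lam_pos h_pos scaled_deriv by auto
  have "\<bar>(1 + lam) * (scaled (t - h) - scaled t) + forcing t\<bar> \<le> ((1 + lam) * G0 + \<Phi>) * exp (lam * t)"
    if "t \<le> T" for t
  proof -
    have "\<bar>(1 + lam) * (scaled (t - h) - scaled t)\<bar> \<le> (1 + lam) * (G0 * exp (lam * t))"
      using G0[OF that] lam_pos by (simp add: abs_mult abs_minus_commute mult_left_mono)
    then show ?thesis
      using f[OF that] abs_triangle_ineq[of "(1 + lam) * (scaled (t - h) - scaled t)" "forcing t"]
      by (simp add: algebra_simps)
  qed
  with converges_at_bot_if_deriv_exp_bounded[OF lam_pos scaled_deriv]
  obtain c where "\<And>t. t \<le> T \<Longrightarrow> \<bar>scaled t - c\<bar> \<le> ((1 + lam) * G0 + \<Phi>) / lam * exp (lam * t)"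
    by blast
  then show ?thesis by blast
qed

lemma psi_expansion: "\<exists>c\<ge>0. \<exists>G T. \<forall>t\<le>T. \<bar>\<psi> t - c * exp (lam * t)\<bar> \<le> G * exp (2 * lam * t)"
proof -
  obtain c G T where cG: "\<And>t. t \<le> T \<Longrightarrow> \<bar>scaled t - c\<bar> \<le> G * exp (lam * t)"
    using scaled_converges by blast
  have "\<bar>\<psi> t - c * exp (lam * t)\<bar> \<le> G * exp (2 * lam * t)" if "t \<le> T" for t
  proof -
    have "\<bar>\<psi> t - c * exp (lam * t)\<bar> = \<bar>scaled t - c\<bar> * exp (lam * t)"
      by (simp add: psi_eq_scaled abs_mult flip: left_diff_distrib)
    also have "\<dots> \<le> G * exp (lam * t) * exp (lam * t)"
      using cG[OF that] by (rule mult_right_mono) simp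
    finally show ?thesis
      by (simp add: mult.assoc flip: exp_add)
  qed
  moreover have "c \<ge> 0"
  proof (rule ccontr)
    assume "\<not> c \<ge> 0"
    then have "eventually (\<lambda>t. G * exp (lam * t) < - c \<and> t \<le> T) at_bot"
      by (intro eventually_conj eventually_mult_exp_less_at_bot lam_pos eventually_le_at_bot) simp
    then obtain t where "G * exp (lam * t) < - c" "t \<le> T"
      using eventually_happens trivial_limit_at_bot_linorder by blast
    then show False
      using cG[of t] scaled_nonneg[of t] by (simp add: abs_le_iff)
  qed
  ultimately show ?thesis by blast
qed

lemma exp_double_rate_contraction:
  assumes "0 \<le> \<eta>" "\<eta> < lam"
  shows "(\<bar>p\<bar> + \<eta>) * exp (- (2 * lam) * h) < 1 + 2 * lam"
proof -
  have "\<bar>p\<bar> * exp (- (2 * lam) * h) = (1 + lam) * exp (- lam * h)"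
    using p_pos by (simp add: mult.assoc flip: char_eq exp_add)
  also have "\<dots> \<le> 1 + lam"
    using lam_pos h_pos by (simp add: mult_le_cancel_left1)
  finally have "\<bar>p\<bar> * exp (- (2 * lam) * h) \<le> 1 + lam" .
  moreover have "\<eta> * exp (- (2 * lam) * h) \<le> \<eta>"
    using assms lam_pos h_pos by (intro mult_left_le) auto
  ultimately show ?thesis
    using assms by (simp add: distrib_right)
qed

text \<open>The difference of two solutions satisfies a perturbed linear equation whose perturbation is
  small near \<open>-\<infinity>\<close>; decay at the rate \<open>2 lam\<close> is too fast for a nonzero solution of it.\<close>

lemma solutions_eq_if_close_at_bot:
  fixes x y :: "real \<Rightarrow> real"
  assumes dx: "\<And>t. (x has_real_derivative (- x t + g (x (t - h)))) (at t)"
    and dy: "\<And>t. (y has_real_derivative (- y t + g (y (t - h)))) (at t)"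
    and x_nonneg: "\<And>t. x t \<ge> 0" and y_nonneg: "\<And>t. y t \<ge> 0"
    and x_lim: "(x \<longlongrightarrow> 0) at_bot" and y_lim: "(y \<longlongrightarrow> 0) at_bot"
    and close: "\<And>t. t \<le> T \<Longrightarrow> \<bar>x t - y t\<bar> \<le> M * exp (2 * lam * t)"
  shows "x = y"
proof -
  define \<epsilon> where "\<epsilon> = min e (lam / (C + 1))"
  have eps: "\<epsilon> > 0" "\<epsilon> \<le> e" "C * \<epsilon> < lam"
  proof -
    show "\<epsilon> > 0" "\<epsilon> \<le> e" using e_pos lam_pos C_nonneg by (simp_all add: \<epsilon>_def)
    have "C * \<epsilon> \<le> C * (lam / (C + 1))"
      using C_nonneg by (intro mult_left_mono) (simp_all add: \<epsilon>_def)
    also have "\<dots> < lam"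
      using C_nonneg lam_pos by (simp add: field_simps)
    finally show "C * \<epsilon> < lam" .
  qed
  have "eventually (\<lambda>t. x t < \<epsilon> \<and> y t < \<epsilon> \<and> t \<le> T) at_bot"
    using order_tendstoD(2)[OF x_lim eps(1)] order_tendstoD(2)[OF y_lim eps(1)]
    by (intro eventually_conj eventually_le_at_bot)
  then obtain T' where T': "\<And>t. t \<le> T' \<Longrightarrow> x t < \<epsilon> \<and> y t < \<epsilon> \<and> t \<le> T"
    unfolding eventually_at_bot_linorder by blast
  define D where "D t = x t - y t" for t
  define \<rho> where "\<rho> t = g (x (t - h)) - g (y (t - h)) - p * D (t - h)" for t
  have dD: "(D has_real_derivative - D t + p * D (t - h) + \<rho> t) (at t)" for t
    unfolding D_def \<rho>_def by (rule derivative_eq_intros refl dx dy | simp add: algebra_simps)+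
  have \<rho>: "\<bar>\<rho> t\<bar> \<le> C * \<epsilon> * \<bar>D (t - h)\<bar>" if "t \<le> T'" for t
  proof -
    have small: "x (t - h) \<in> {0..e}" "y (t - h) \<in> {0..e}" "max (x (t - h)) (y (t - h)) \<le> \<epsilon>"
      using T'[of "t - h"] that h_pos eps x_nonneg y_nonneg by auto
    have "C * max (x (t - h)) (y (t - h)) * \<bar>D (t - h)\<bar> \<le> C * \<epsilon> * \<bar>D (t - h)\<bar>"
      using small(3) C_nonneg by (intro mult_right_mono mult_left_mono) auto
    then show ?thesis
      using linearization[OF small(1,2)] by (simp add: \<rho>_def D_def)
  qed
  have decay: "\<bar>D t\<bar> \<le> M * exp (2 * lam * t)" if "t \<le> T'" for t
    using close T'[OF that] by (simp add: D_def)
  have "D t = 0" if "t \<le> T'" for t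
    using delay_solution_vanishes_if_fast_decay[OF _ _ _ dD \<rho> decay exp_double_rate_contraction that]
      h_pos lam_pos C_nonneg eps by auto
  then show "x = y"
    by (intro delay_solutions_agree[OF h_pos dx dy, of T']) (simp add: D_def)
qed

lemma psi_asymptotics: "\<exists>c>0. \<exists>G T. \<forall>t\<le>T. \<bar>\<psi> t - c * exp (lam * t)\<bar> \<le> G * exp (2 * lam * t)"
proof -
  obtain c G T where c: "c \<ge> 0" and cG: "\<And>t. t \<le> T \<Longrightarrow> \<bar>\<psi> t - c * exp (lam * t)\<bar> \<le> G * exp (2 * lam * t)"
    using psi_expansion by blast
  have "c \<noteq> 0"
  proof
    assume "c = 0"
    have "((\<lambda>_. 0) has_real_derivative - 0 + g 0) (at t)" for t
      using g0 by simp
    moreover have "\<bar>\<psi> t - 0\<bar> \<le> G * exp (2 * lam * t)" if "t \<le> T" for t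
      using cG[OF that] \<open>c = 0\<close> by simp
    ultimately have "\<psi> = (\<lambda>_. 0)"
      using solutions_eq_if_close_at_bot[OF psi_deriv _ psi_nonneg _ psi_at_bot tendsto_const] by blast
    then have "((\<lambda>_::real. 0) \<longlongrightarrow> K) at_top"
      using psi_at_top by simp
    then have "K = 0"
      using tendsto_unique[OF trivial_limit_at_top_linorder _ tendsto_const] by blast
    then show False
      using K_pos by simp
  qed
  then show ?thesis
    using c cG by (intro exI[of _ c]) auto
qed


lemma psi_sq_le_if_expansion:
  assumes expansion: "\<And>t. t \<le> T \<Longrightarrow> \<bar>\<psi> t - c * exp (lam * t)\<bar> \<le> G * exp (2 * lam * t)"
    and t: "t \<le> min T 0"
  shows "\<psi> t ^ 2 \<le> (\<bar>c\<bar> + G) ^ 2 * exp (2 * lam * t)"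
proof -
  have "exp (2 * lam * t) \<le> exp (lam * t)"
    using t lam_pos by (simp add: mult_le_0_iff)
  then have "G * exp (2 * lam * t) \<le> G * exp (lam * t)"
    using nonneg_if_abs_le_mult_exp[OF expansion[OF order_refl]] by (rule mult_left_mono)
  moreover have "c * exp (lam * t) \<le> \<bar>c\<bar> * exp (lam * t)"
    by (intro mult_right_mono) auto
  moreover have "\<bar>\<psi> t - c * exp (lam * t)\<bar> \<le> G * exp (2 * lam * t)"
    using expansion t by simp
  ultimately have "\<psi> t \<le> (\<bar>c\<bar> + G) * exp (lam * t)"
    unfolding abs_le_iff distrib_right by linarith
  then have "\<psi> t ^ 2 \<le> ((\<bar>c\<bar> + G) * exp (lam * t)) ^ 2"
    by (rule power_mono[OF _ psi_nonneg])
  then show ?thesis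
    by (simp add: power_mult_distrib mult.assoc flip: exp_of_nat_mult)
qed

lemma deriv_psi_expansion:
  assumes expansion: "\<And>t. t \<le> T \<Longrightarrow> \<bar>\<psi> t - c * exp (lam * t)\<bar> \<le> G * exp (2 * lam * t)"
  shows "\<exists>M T'. \<forall>t\<le>T'. \<bar>deriv \<psi> t - lam * c * exp (lam * t)\<bar> \<le> M * exp (2 * lam * t)"
proof -
  obtain T2 where T2: "\<And>t. t \<le> T2 \<Longrightarrow> \<psi> t \<le> e"
    using psi_small_at_bot[OF e_pos] by blast
  have G: "G \<ge> 0"
    using nonneg_if_abs_le_mult_exp[OF expansion[OF order_refl]] .
  define M where "M = G + p * G + C * (\<bar>c\<bar> + G)\<^sup>2"
  have "\<bar>deriv \<psi> t - lam * c * exp (lam * t)\<bar> \<le> M * exp (2 * lam * t)"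
    if t: "t \<le> min T (min T2 0)" for t
  proof -
    have th: "t - h \<le> min T 0" "t - h \<le> T2"
      using t h_pos by auto
    have exp_le: "exp (2 * lam * (t - h)) \<le> exp (2 * lam * t)"
      using lam_pos h_pos by simp
    define A where "A = \<psi> t - c * exp (lam * t)"
    define B where "B = p * (\<psi> (t - h) - c * exp (lam * (t - h)))"
    define r where "r = g (\<psi> (t - h)) - p * \<psi> (t - h)"
    have "p * (c * exp (lam * (t - h))) = (1 + lam) * (c * exp (lam * t))"
      by (simp add: exp_lam_delay mult_ac flip: char_eq)
    then have "deriv \<psi> t - lam * c * exp (lam * t) = - A + B + r"
      using DERIV_imp_deriv[OF psi_deriv] by (simp add: A_def B_def r_def algebra_simps)
    then have "\<bar>deriv \<psi> t - lam * c * exp (lam * t)\<bar> \<le> \<bar>A\<bar> + \<bar>B\<bar> + \<bar>r\<bar>"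
      using abs_triangle_ineq[of "- A + B" r] abs_triangle_ineq[of "- A" B] by simp
    moreover have "\<bar>A\<bar> \<le> G * exp (2 * lam * t)"
      using expansion[of t] t by (simp add: A_def)
    moreover have "\<bar>\<psi> (t - h) - c * exp (lam * (t - h))\<bar> \<le> G * exp (2 * lam * t)"
      using expansion[of "t - h"] th mult_left_mono[OF exp_le G] by simp
    then have "\<bar>B\<bar> \<le> p * G * exp (2 * lam * t)"
      using p_pos by (simp add: B_def abs_mult mult_left_mono mult.assoc)
    moreover have "\<bar>r\<bar> \<le> C * (\<bar>c\<bar> + G)\<^sup>2 * exp (2 * lam * t)"
    proof -
      have "\<bar>r\<bar> \<le> C * \<psi> (t - h) ^ 2"
        using g_quadratic[of "\<psi> (t - h)"] T2[OF th(2)] psi_nonneg by (simp add: r_def)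
      also have "\<dots> \<le> C * ((\<bar>c\<bar> + G) ^ 2 * exp (2 * lam * t))"
        using psi_sq_le_if_expansion[where T = T, OF expansion th(1)]
          mult_left_mono[OF exp_le, of "(\<bar>c\<bar> + G) ^ 2"] C_nonneg
        by (intro mult_left_mono) auto
      finally show ?thesis by (simp add: mult.assoc)
    qed
    ultimately show ?thesis
      unfolding M_def distrib_right by linarith
  qed
  then show ?thesis by blast
qed

lemma psi_shifted_bigo:
  assumes "\<delta> > 0"
  shows "\<exists>t0. (\<lambda>t. \<psi> (t - t0) - exp (lam * t)) \<in> O[at_bot](\<lambda>t. exp ((2 * lam - \<delta>) * t)) \<and>
    (\<lambda>t. deriv \<psi> (t - t0) - lam * exp (lam * t)) \<in> O[at_bot](\<lambda>t. exp ((2 * lam - \<delta>) * t))"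
proof -
  obtain c G T where c: "c > 0" and cG: "\<And>t. t \<le> T \<Longrightarrow> \<bar>\<psi> t - c * exp (lam * t)\<bar> \<le> G * exp (2 * lam * t)"
    using psi_asymptotics by blast
  obtain M T' where M: "\<And>t. t \<le> T' \<Longrightarrow> \<bar>deriv \<psi> t - lam * c * exp (lam * t)\<bar> \<le> M * exp (2 * lam * t)"
    using deriv_psi_expansion[OF cG] by blast
  have "\<bar>\<psi> t - 1 * c * exp (lam * t)\<bar> \<le> G * exp (2 * lam * t)" if "t \<le> T" for t
    using cG[OF that] by simp
  from shifted_exp_expansion_bigo[where T = T, OF c lam_pos assms
      nonneg_if_abs_le_mult_exp[OF cG[OF order_refl]] this]
    shifted_exp_expansion_bigo[where T = T', OF c lam_pos assms nonneg_if_abs_le_mult_exp[OF M[OF order_refl]] M]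
  show ?thesis by auto
qed

lemma deriv_psi_pos_at_bot: "\<exists>T. \<forall>t\<le>T. deriv \<psi> t > 0"
proof -
  obtain c G T where c: "c > 0" and cG: "\<And>t. t \<le> T \<Longrightarrow> \<bar>\<psi> t - c * exp (lam * t)\<bar> \<le> G * exp (2 * lam * t)"
    using psi_asymptotics by blast
  obtain M T' where M: "\<And>t. t \<le> T' \<Longrightarrow> \<bar>deriv \<psi> t - lam * c * exp (lam * t)\<bar> \<le> M * exp (2 * lam * t)"
    using deriv_psi_expansion[OF cG] by blast
  have "eventually (\<lambda>t. M * exp (lam * t) < lam * c \<and> t \<le> T') at_bot"
    using c lam_pos by (intro eventually_conj eventually_mult_exp_less_at_bot eventually_le_at_bot) auto
  then obtain T'' where T'': "\<And>t. t \<le> T'' \<Longrightarrow> M * exp (lam * t) < lam * c \<and> t \<le> T'"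
    unfolding eventually_at_bot_linorder by blast
  have "deriv \<psi> t > 0" if "t \<le> T''" for t
  proof -
    have "M * exp (2 * lam * t) < lam * c * exp (lam * t)"
      using T''[OF that] mult_strict_right_mono[of "M * exp (lam * t)" "lam * c" "exp (lam * t)"]
      by (simp add: mult.assoc flip: exp_add)
    then show ?thesis
      using M[of t] T''[OF that] by (simp add: abs_le_iff)
  qed
  then show ?thesis by blast
qed

lemma front_asymptotics:
  "(\<forall>\<delta>>0. \<exists>t0.
      (\<lambda>t. \<psi> (t - t0) - exp (lam * t)) \<in> O[at_bot](\<lambda>t. exp ((2 * lam - \<delta>) * t)) \<and>
      (\<lambda>t. deriv \<psi> (t - t0) - lam * exp (lam * t)) \<in> O[at_bot](\<lambda>t. exp ((2 * lam - \<delta>) * t)))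
    \<and> (\<exists>T. \<forall>t\<le>T. deriv \<psi> t > 0)"
  using psi_shifted_bigo deriv_psi_pos_at_bot by blast

lemma front_unique:
  assumes \<phi>: "connecting_solution g h K \<phi>"
  shows "\<exists>s. \<forall>t. \<phi> t = \<psi> (t + s)"
proof -
  interpret \<phi>: delay_front g \<phi> h K p lam C e
    using h_pos K_pos g0 \<phi> lam_pos char_eq e_pos C_nonneg linearization by unfold_locales
  obtain c1 G1 T1 where c1: "c1 > 0"
    and \<psi>_exp: "\<And>t. t \<le> T1 \<Longrightarrow> \<bar>\<psi> t - c1 * exp (lam * t)\<bar> \<le> G1 * exp (2 * lam * t)"
    using psi_asymptotics by blast
  obtain c2 G2 T2 where c2: "c2 > 0"
    and \<phi>_exp: "\<And>t. t \<le> T2 \<Longrightarrow> \<bar>\<phi> t - c2 * exp (lam * t)\<bar> \<le> G2 * exp (2 * lam * t)"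
    using \<phi>.psi_asymptotics by blast
  define s where "s = (ln c2 - ln c1) / lam"
  have s: "c1 * exp (lam * s) = c2"
    using c1 c2 lam_pos by (simp add: s_def exp_diff)
  have "\<bar>\<phi> t - \<psi> (t + s)\<bar> \<le> (G2 + G1 * exp (2 * lam * s)) * exp (2 * lam * t)"
    if "t \<le> min T2 (T1 - s)" for t
  proof -
    have "c1 * exp (lam * (t + s)) = c1 * exp (lam * s) * exp (lam * t)"
      "exp (2 * lam * (t + s)) = exp (2 * lam * s) * exp (2 * lam * t)"
      by (simp_all add: algebra_simps flip: exp_add)
    then have "c1 * exp (lam * (t + s)) = c2 * exp (lam * t)"
      "exp (2 * lam * (t + s)) = exp (2 * lam * s) * exp (2 * lam * t)"
      using s by simp_all
    then show ?thesis
      using \<psi>_exp[of "t + s"] \<phi>_exp[of t] that by (simp add: algebra_simps abs_le_iff)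
  qed
  moreover have "((\<lambda>t. \<psi> (t + s)) has_real_derivative - \<psi> (t + s) + g (\<psi> (t - h + s))) (at t)" for t
    using psi_deriv[of "t + s"] unfolding DERIV_shift by (simp only: diff_add_eq)
  moreover have "((\<lambda>t. \<psi> (t + s)) \<longlongrightarrow> 0) at_bot"
    using filterlim_compose[OF psi_at_bot filterlim_tendsto_add_at_bot_iff[OF tendsto_const[of s],
          THEN iffD2, OF filterlim_ident]]
    by (simp add: add.commute)
  ultimately have "\<phi> = (\<lambda>t. \<psi> (t + s))"
    using solutions_eq_if_close_at_bot[where y = "\<lambda>t. \<psi> (t + s)" and T = "min T2 (T1 - s)",
        OF \<phi>.psi_deriv _ \<phi>.psi_nonneg psi_nonneg \<phi>.psi_at_bot]
    by blast
  then show ?thesis by auto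
qed

end

theorem lemma8:
  fixes g g' \<psi> :: "real \<Rightarrow> real" and h K p lam :: real
  assumes h_pos: "h > 0" and K_pos: "K > 0"
    and g_deriv: "\<And>x. x \<ge> 0 \<Longrightarrow> (g has_real_derivative g' x) (at x within {0..})"
    and g'_cont: "continuous_on {0..} g'"
    and g_nonneg: "\<And>x. x \<ge> 0 \<Longrightarrow> g x \<ge> 0"
    and g0: "g 0 = 0" and gK: "g K = K"
    and p_def: "g' 0 = p" and p_gt: "p > 1"
    and sol: "connecting_solution g h K \<psi>"
    and lam_pos: "lam > 0" and lam_root: "lam = -1 + p * exp (- lam * h)"
  shows
    "((\<exists>\<epsilon>>0. \<exists>g''. (\<forall>s\<in>{0<..<\<epsilon>}. (g' has_real_derivative g'' s) (at s)) \<and>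
                  (\<exists>L. (g'' \<longlongrightarrow> L) (at_right 0)))
      \<longrightarrow> (\<forall>\<delta>>0. \<exists>t0.
             (\<lambda>t. \<psi> (t - t0) - exp (lam * t)) \<in> O[at_bot](\<lambda>t. exp ((2 * lam - \<delta>) * t)) \<and>
             (\<lambda>t. deriv \<psi> (t - t0) - lam * exp (lam * t)) \<in> O[at_bot](\<lambda>t. exp ((2 * lam - \<delta>) * t)))
          \<and> (\<exists>T. \<forall>t\<le>T. deriv \<psi> t > 0))
     \<and>
     ((\<exists>\<epsilon>>0. \<exists>g''. (\<forall>s\<in>{0..<\<epsilon>}. (g' has_real_derivative g'' s) (at s within {0..})) \<and>
                  bounded (g'' ` {0..<\<epsilon>}))
      \<longrightarrow> (\<forall>\<phi>. connecting_solution g h K \<phi> \<longrightarrow> (\<exists>c. \<forall>t. \<phi> t = \<psi> (t + c))))"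
proof -
  have front: "delay_front g \<phi> h K p lam B e"
    if "connecting_solution g h K \<phi>" "e > 0" "B \<ge> 0" "\<forall>s\<in>{0..e}. \<bar>g' s - g' 0\<bar> \<le> B * s"
    for \<phi> B e
    using that h_pos K_pos g0 lam_pos lam_root linearization_error_bound[OF g_deriv, of e p B] p_def
    by unfold_locales auto
  show ?thesis
  proof (rule conjI; rule impI)
    assume "\<exists>\<epsilon>>0. \<exists>g''. (\<forall>s\<in>{0<..<\<epsilon>}. (g' has_real_derivative g'' s) (at s)) \<and>
      (\<exists>L. (g'' \<longlongrightarrow> L) (at_right 0))"
    then obtain \<epsilon> g'' L where "\<epsilon> > 0" "\<forall>s\<in>{0<..<\<epsilon>}. (g' has_real_derivative g'' s) (at s)"
      "(g'' \<longlongrightarrow> L) (at_right 0)"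
      by blast
    from lipschitz_at_0_if_deriv_tendsto[OF g'_cont this] obtain e B
      where "delay_front g \<psi> h K p lam B e"
      using front[OF sol] by blast
    then show "(\<forall>\<delta>>0. \<exists>t0.
        (\<lambda>t. \<psi> (t - t0) - exp (lam * t)) \<in> O[at_bot](\<lambda>t. exp ((2 * lam - \<delta>) * t)) \<and>
        (\<lambda>t. deriv \<psi> (t - t0) - lam * exp (lam * t)) \<in> O[at_bot](\<lambda>t. exp ((2 * lam - \<delta>) * t)))
      \<and> (\<exists>T. \<forall>t\<le>T. deriv \<psi> t > 0)"
      by (rule delay_front.front_asymptotics)
  next
    assume "\<exists>\<epsilon>>0. \<exists>g''. (\<forall>s\<in>{0..<\<epsilon>}. (g' has_real_derivative g'' s) (at s within {0..})) \<and>
      bounded (g'' ` {0..<\<epsilon>})"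
    then obtain \<epsilon> g'' where "\<epsilon> > 0" "\<forall>s\<in>{0..<\<epsilon>}. (g' has_real_derivative g'' s) (at s within {0..})"
      "bounded (g'' ` {0..<\<epsilon>})"
      by blast
    from lipschitz_at_0_if_deriv_bounded[OF this] obtain e B
      where "delay_front g \<psi> h K p lam B e"
      using front[OF sol] by blast
    then show "\<forall>\<phi>. connecting_solution g h K \<phi> \<longrightarrow> (\<exists>c. \<forall>t. \<phi> t = \<psi> (t + c))"
      using delay_front.front_unique by blast
  qed
qed

end
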